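(* For every non-negative integer $m$ and positive integer $n$, $$\sum_{k=1}^n\frac{H_{n-k}(m)}{k(k+1)}=H_n(m)+H_n(m+1)-H_{n+1}(m+1).$$ In particular, $\sum_{k=1}^n\frac{H_{n-k}}{k(k+1)}=H_n+H_n^2-H_n^{(2)}-H_{n+1}^2+H_{n+1}^{(2)}$.
   Context: For integers $m\ge 1$, $n\ge 0$, the multiple harmonic-like numbers are $H_n(m)=\sum_{1\le k_1+k_2+\cdots+k_m\le n}\frac{1}{k_1k_2\cdots k_m}$ (sum over positive integers $k_1,\dots,k_m$), with $H_n(0)=1$ for $n\ge 0$ and $H_0(m)=0$ for $m\ge1$. $H_n=H_n(1)=\sum_{k=1}^n\frac1k$, $H_n^{(2)}=\sum_{k=1}^n\frac1{k^2}$. *)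

theory Defs
  imports Complex_Main
begin

text \<open>For m = 0 the only tuple is the
empty one (sum 0, product 1), so H n 0 = 1; for m >= 1, H 0 m = 0.\<close>

definition mh_tuples :: "nat \<Rightarrow> nat \<Rightarrow> nat list set" where
  "mh_tuples n m = {ks. length ks = m \<and> (\<forall>k\<in>set ks. 1 \<le> k) \<and> sum_list ks \<le> n}"

definition H :: "nat \<Rightarrow> nat \<Rightarrow> real" where
  "H n m = (\<Sum>ks\<in>mh_tuples n m. 1 / real (prod_list ks))"

end

theory Submission
  imports Defs "HOL-Analysis.Harmonic_Numbers"
begin

text \<open>Splitting off the first coordinate of a tuple gives the recursion
  H n (m+1) = \<Sum>k=1..n. H (n-k) m / k. Writing 1/(k(k+1)) = 1/k - 1/(k+1), the 1/k part of
  the sum is therefore H n (m+1), and the 1/(k+1) part is the same recursion for H (n+1) (m+1)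
  with its k = 1 term H n m removed. For m = 1 one needs H n 1 = harm n and
  H n 2 = (harm n)^2 - harm2 n; the latter follows by induction on n from the partial fraction
  decomposition 1/(k(n+1-k)) = (1/k + 1/(n+1-k))/(n+1).\<close>

lemma finite_mh_tuples: "finite (mh_tuples n m)"
proof -
  have "mh_tuples n m \<subseteq> {xs. set xs \<subseteq> {0..n} \<and> length xs = m}"
    unfolding mh_tuples_def using member_le_sum_list by fastforce
  then show ?thesis
    using finite_lists_length_eq[of "{0..n}" m] finite_subset by blast
qed

lemma H_0_right [simp]: "H n 0 = 1"
proof -
  have "mh_tuples n 0 = {[]}"
    unfolding mh_tuples_def by auto
  then show ?thesis
    unfolding H_def by simp
qed

lemma mh_tuples_Suc:
  "mh_tuples n (Suc m) = (\<lambda>(k, ks). k # ks) ` (SIGMA k:{1..n}. mh_tuples (n - k) m)"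
proof (intro set_eqI iffI)
  fix xs assume "xs \<in> mh_tuples n (Suc m)"
  then obtain k ks where "xs = k # ks" "1 \<le> k" "length ks = m"
    "\<forall>j\<in>set ks. 1 \<le> j" "k + sum_list ks \<le> n"
    unfolding mh_tuples_def by (cases xs) auto
  then show "xs \<in> (\<lambda>(k, ks). k # ks) ` (SIGMA k:{1..n}. mh_tuples (n - k) m)"
    unfolding mh_tuples_def by force
qed (auto simp: mh_tuples_def)

lemma H_Suc_right: "H n (Suc m) = (\<Sum>k=1..n. H (n - k) m / real k)"
proof -
  let ?S = "SIGMA k:{1..n}. mh_tuples (n - k) m"
  have inj: "inj_on (\<lambda>(k, ks). k # ks) ?S"
    by (auto simp: inj_on_def)
  have "H n (Suc m) = (\<Sum>(k, ks)\<in>?S. 1 / real (prod_list (k # ks)))"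
    unfolding H_def mh_tuples_Suc by (subst sum.reindex[OF inj]) (simp add: case_prod_unfold)
  also have "\<dots> = (\<Sum>k=1..n. \<Sum>ks\<in>mh_tuples (n - k) m. 1 / real (prod_list (k # ks)))"
    by (rule sum.Sigma[symmetric]) (auto simp: finite_mh_tuples)
  also have "\<dots> = (\<Sum>k=1..n. H (n - k) m / real k)"
    unfolding H_def by (simp add: sum_divide_distrib mult.commute)
  finally show ?thesis .
qed

lemma H_Suc_Suc:
  "H (Suc n) (Suc m) = H n m + (\<Sum>k=1..n. H (n - k) m / real (Suc k))"
proof -
  have "H (Suc n) (Suc m) = H n m + (\<Sum>k=Suc 1..Suc n. H (Suc n - k) m / real k)"
    unfolding H_Suc_right by (subst sum.atLeast_Suc_atMost) auto
  also have "(\<Sum>k=Suc 1..Suc n. H (Suc n - k) m / real k) = (\<Sum>k=1..n. H (n - k) m / real (Suc k))"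
    by (subst sum.shift_bounds_cl_Suc_ivl) simp
  finally show ?thesis .
qed

lemma sum_H_div_consecutive_product:
  "(\<Sum>k=1..n. H (n - k) m / (real k * real (k + 1))) = H n m + H n (m + 1) - H (n + 1) (m + 1)"
proof -
  have "(\<Sum>k=1..n. H (n - k) m / (real k * real (k + 1)))
      = (\<Sum>k=1..n. H (n - k) m / real k) - (\<Sum>k=1..n. H (n - k) m / real (Suc k))"
    by (subst sum_subtractf[symmetric], rule sum.cong) (auto simp: field_simps)
  then show ?thesis
    using H_Suc_right[of n m] H_Suc_Suc[of n m] by simp
qed

definition harm2 :: "nat \<Rightarrow> real" where
  "harm2 n = (\<Sum>k=1..n. 1 / (real k)^2)"

lemma H_1_right: "H n 1 = harm n"
  using H_Suc_right[of n 0] by (simp add: harm_def inverse_eq_divide)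

lemma sum_inverse_mult_complement:
  "(\<Sum>k=1..n. 1 / (real k * real (n + 1 - k))) = 2 * harm n / real (n + 1)"
proof -
  have split: "1 / (real k * real (n + 1 - k)) = (1 / real k + 1 / real (n + 1 - k)) / real (n + 1)"
    if "k \<in> {1..n}" for k
    using that by (simp add: of_nat_diff divide_simps)
  have reflect: "(\<Sum>k=1..n. 1 / real (n + 1 - k)) = harm n"
    unfolding harm_def inverse_eq_divide
    by (rule sum.reindex_bij_witness[where i="\<lambda>k. n + 1 - k" and j="\<lambda>k. n + 1 - k"]) auto
  have "(\<Sum>k=1..n. 1 / (real k * real (n + 1 - k)))
      = (\<Sum>k=1..n. 1 / real k + 1 / real (n + 1 - k)) / real (n + 1)"
    unfolding sum_divide_distrib by (rule sum.cong[OF refl split])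
  also have "\<dots> = 2 * harm n / real (n + 1)"
    by (simp only: sum.distrib reflect) (simp add: harm_def inverse_eq_divide)
  finally show ?thesis .
qed

lemma sum_harm_diff_div: "(\<Sum>k=1..n. harm (n - k) / real k) = (harm n)^2 - harm2 n"
proof (induction n)
  case 0
  then show ?case by (simp add: harm_def harm2_def)
next
  case (Suc n)
  have "(\<Sum>k=1..Suc n. harm (Suc n - k) / real k) = (\<Sum>k=1..n. harm (Suc n - k) / real k)"
    by (simp add: harm_def)
  also have "\<dots> = (\<Sum>k=1..n. harm (n - k) / real k + 1 / (real k * real (n + 1 - k)))"
  proof (rule sum.cong[OF refl])
    fix k assume "k \<in> {1..n}"
    then have "harm (Suc n - k) = harm (n - k) + 1 / real (n + 1 - k)"
      by (simp add: Suc_diff_le harm_Suc inverse_eq_divide)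
    then show "harm (Suc n - k) / real k = harm (n - k) / real k + 1 / (real k * real (n + 1 - k))"
      by (simp add: add_divide_distrib)
  qed
  also have "\<dots> = (harm n)^2 - harm2 n + 2 * harm n / real (n + 1)"
    by (simp only: sum.distrib Suc.IH sum_inverse_mult_complement)
  also have "\<dots> = (harm n + 1 / real (n + 1))^2 - (harm2 n + 1 / (real (n + 1))^2)"
  proof -
    have "h^2 - b + 2 * h / x = (h + 1 / x)^2 - (b + 1 / x^2)" if "x \<noteq> 0" for h b x :: real
      using that by (simp add: power2_eq_square field_simps)
    then show ?thesis by simp
  qed
  also have "\<dots> = (harm (Suc n))^2 - harm2 (Suc n)"
    by (simp add: harm_Suc harm2_def inverse_eq_divide)
  finally show ?case .
qed

lemma H_2_right: "H n 2 = (harm n)^2 - harm2 n"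
proof -
  have "H n 2 = (\<Sum>k=1..n. H (n - k) 1 / real k)"
    using H_Suc_right[of n 1] by (simp add: numeral_2_eq_2)
  then show ?thesis
    by (simp only: H_1_right sum_harm_diff_div)
qed

theorem theorem8:
  fixes m n :: nat
  assumes "1 \<le> n"
  shows "((\<Sum>k=1..n. H (n - k) m / (real k * real (k + 1)))
           = H n m + H n (m + 1) - H (n + 1) (m + 1))
         \<and> ((\<Sum>k=1..n. (\<Sum>j=1..n-k. 1 / real j) / (real k * real (k + 1)))
           = (\<Sum>j=1..n. 1 / real j) + (\<Sum>j=1..n. 1 / real j)^2 - (\<Sum>j=1..n. 1 / (real j)^2)
             - (\<Sum>j=1..n+1. 1 / real j)^2 + (\<Sum>j=1..n+1. 1 / (real j)^2))"
proof
  show "(\<Sum>k=1..n. H (n - k) m / (real k * real (k + 1))) = H n m + H n (m + 1) - H (n + 1) (m + 1)"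
    by (rule sum_H_div_consecutive_product)
  have "(\<Sum>k=1..n. harm (n - k) / (real k * real (k + 1)))
      = harm n + ((harm n)^2 - harm2 n) - ((harm (n + 1))^2 - harm2 (n + 1))"
    using sum_H_div_consecutive_product[of n 1] unfolding one_add_one H_1_right H_2_right .
  then show "(\<Sum>k=1..n. (\<Sum>j=1..n-k. 1 / real j) / (real k * real (k + 1)))
      = (\<Sum>j=1..n. 1 / real j) + (\<Sum>j=1..n. 1 / real j)^2 - (\<Sum>j=1..n. 1 / (real j)^2)
        - (\<Sum>j=1..n+1. 1 / real j)^2 + (\<Sum>j=1..n+1. 1 / (real j)^2)"
    by (simp add: harm_def harm2_def inverse_eq_divide)
qed

end
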